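(* Let $1\le t\le k-1$ and let $x$ be the frequency vector of an $\mathrm{OA}(N,k,2,t)$ with symbols from $\{-1,1\}$. If $t$ is even, then the formulation symmetry group of ILP (M) contains (the permutations of variables induced by) $G(k)^{\rm OD}$, and for each $g\in G(k)^{\rm OD}$, $g(x)$ is the frequency vector of an $\mathrm{OA}(N,k,2,t)$ that is OD-equivalent to the one with frequency vector $x$. If $t$ is odd, then the formulation symmetry group of ILP (M) contains $G^{\rm iso}(k,2)$, and for each $g\in G^{\rm iso}(k,2)$, $g(x)$ is the frequency vector of an $\mathrm{OA}(N,k,2,t)$ isomorphic to the one with frequency vector $x$.
   Context: An $\mathrm{OA}(N,k,2,t)$ over $\{-1,1\}$ is an $N\times k$ array such that in every $N\times t$ subarray each of the $2^t$ $t$-tuples appears $N/2^t$ times. Its frequency vector is $x=(x_z)_{z\in\{-1,1\}^k}$, $x_z$ the number of rows equal to $z$. Let $Z$ be the $2^k\times k$ matrix whose rows are all vectors of $\{-1,1\}^k$, with columns $z_1,\dots,z_k$, and for $i_1<\dots<i_r$ let $z_{i_1,\dots,i_r}$ be the entrywise product $z_{i_1}\odot\cdots\odot z_{i_r}$. $M$ is the matrix whose rows are $z_{i_1,\dots,i_r}^{\top}$ for all $1\le r\le t$ and all $i_1<\dots<i_r$. ILP (M) is: minimize $\mathbf 1^{\top}x$ s.t. $\mathbf 1^{\top}x=N$, $Mx=0$, $-Mx=0$, $x\ge0$, $x\in\mathbb Z^{2^k}$. Formulation symmetry group: the set of variable permutations $\pi$ with $\pi(c)=c$ for which there exist row permutations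 of the equality and inequality systems that, together with permuting columns by $\pi$, return the same constraint matrices and right-hand sides. $G(k)^{\rm OD}$ is the group of permutations of $\{-1,1\}^k$ generated by coordinate permutations, single-coordinate sign changes, and $R_i(z_1,\dots,z_k)=(z_1z_i,\dots,z_{i-1}z_i,z_i,z_{i+1}z_i,\dots,z_kz_i)$; $G^{\rm iso}(k,2)$ is the subgroup generated by coordinate permutations and sign changes. A permutation $g$ of $\{-1,1\}^k$ acts on frequency vectors by $g(x)_{g(z)}=x_z$. Two arrays are isomorphic if the multiset of rows of one equals that of the image of the other under some element of $G^{\rm iso}(k,2)$. $X_1,X_2$ are OD-equivalent if $[\mathbf 1,X_1]$ and $[\mathbf 1,X_2]$ are related by signed permutations of rows and columns. *)

theory Defs
  imports "HOL-Combinatorics.Permutations" "HOL-Library.Multiset"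
begin

definition pm_vecs :: "nat \<Rightarrow> int list set" where
  "pm_vecs k = {z. length z = k \<and> set z \<subseteq> {-1, 1}}"

definition is_OA :: "nat \<Rightarrow> nat \<Rightarrow> nat \<Rightarrow> int list list \<Rightarrow> bool" where
  "is_OA N k t X \<longleftrightarrow> length X = N \<and> (\<forall>r\<in>set X. r \<in> pm_vecs k) \<and>
     (\<forall>S. S \<subseteq> {..<k} \<and> card S = t \<longrightarrow>
        (\<forall>u\<in>pm_vecs k. 2 ^ t * length (filter (\<lambda>r. \<forall>i\<in>S. r ! i = u ! i) X) = N))"

definition freq :: "int list list \<Rightarrow> int list \<Rightarrow> nat" where
  "freq X z = count (mset X) z"

text \<open>Action of a permutation g of {-1,1}^k on frequency vectors: g(x)_{g(z)} = x_z.\<close>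
definition act :: "nat \<Rightarrow> (int list \<Rightarrow> int list) \<Rightarrow> (int list \<Rightarrow> nat) \<Rightarrow> int list \<Rightarrow> nat" where
  "act k g x = (\<lambda>w. if w \<in> pm_vecs k then x (the_inv_into (pm_vecs k) g w) else 0)"

definition coord_perm :: "nat \<Rightarrow> (nat \<Rightarrow> nat) \<Rightarrow> int list \<Rightarrow> int list" where
  "coord_perm k \<sigma> z = map (\<lambda>i. z ! \<sigma> i) [0..<k]"

definition sign_change :: "nat \<Rightarrow> int list \<Rightarrow> int list" where
  "sign_change i z = z[i := - (z ! i)]"

definition R_op :: "nat \<Rightarrow> nat \<Rightarrow> int list \<Rightarrow> int list" where
  "R_op k i z = map (\<lambda>j. if j = i then z ! i else z ! j * z ! i) [0..<k]"

inductive_set gen_by :: "('a \<Rightarrow> 'a) set \<Rightarrow> ('a \<Rightarrow> 'a) set" for gens where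
  gen_id: "id \<in> gen_by gens"
| gen_comp: "g \<in> gens \<Longrightarrow> h \<in> gen_by gens \<Longrightarrow> g \<circ> h \<in> gen_by gens"

definition G_iso_gens :: "nat \<Rightarrow> (int list \<Rightarrow> int list) set" where
  "G_iso_gens k = {coord_perm k \<sigma> | \<sigma>. \<sigma> permutes {..<k}} \<union> {sign_change i | i. i < k}"

definition G_OD_gens :: "nat \<Rightarrow> (int list \<Rightarrow> int list) set" where
  "G_OD_gens k = G_iso_gens k \<union> {R_op k i | i. i < k}"

definition G_iso :: "nat \<Rightarrow> (int list \<Rightarrow> int list) set" where
  "G_iso k = gen_by (G_iso_gens k)"

definition G_OD :: "nat \<Rightarrow> (int list \<Rightarrow> int list) set" where
  "G_OD k = gen_by (G_OD_gens k)"

text \<open>Rows of M: z_S for S \<subseteq> {0..k-1}, 1 \<le> |S| \<le> t. Inequality system: rows of M and -M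
  (rhs 0); equality system: the single row 1^T x = N. Objective c = 1.\<close>

definition M_row :: "nat set \<Rightarrow> int list \<Rightarrow> int" where
  "M_row S z = (\<Prod>i\<in>S. z ! i)"

definition M_subsets :: "nat \<Rightarrow> nat \<Rightarrow> nat set set" where
  "M_subsets k t = {S. S \<subseteq> {..<k} \<and> 1 \<le> card S \<and> card S \<le> t}"

definition ineq_rows :: "nat \<Rightarrow> nat \<Rightarrow> (nat set \<times> int) set" where
  "ineq_rows k t = M_subsets k t \<times> {1, -1}"

definition ineq_A :: "nat set \<times> int \<Rightarrow> int list \<Rightarrow> int" where
  "ineq_A r z = snd r * M_row (fst r) z"

definition ineq_b :: "nat set \<times> int \<Rightarrow> int" where
  "ineq_b r = 0"

definition eq_A :: "unit \<Rightarrow> int list \<Rightarrow> int" where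
  "eq_A r z = 1"

definition eq_b :: "nat \<Rightarrow> unit \<Rightarrow> int" where
  "eq_b N r = int N"

definition ilp_obj :: "int list \<Rightarrow> int" where
  "ilp_obj z = 1"

definition sys_sym :: "'v set \<Rightarrow> ('v \<Rightarrow> 'v) \<Rightarrow> 'r set \<Rightarrow> ('r \<Rightarrow> 'v \<Rightarrow> int) \<Rightarrow> ('r \<Rightarrow> int) \<Rightarrow> bool" where
  "sys_sym V \<pi> R A b \<longleftrightarrow> (\<exists>\<rho>. bij_betw \<rho> R R \<and>
      (\<forall>r\<in>R. b (\<rho> r) = b r \<and> (\<forall>z\<in>V. A (\<rho> r) (\<pi> z) = A r z)))"

definition formulation_sym :: "nat \<Rightarrow> nat \<Rightarrow> nat \<Rightarrow> (int list \<Rightarrow> int list) \<Rightarrow> bool" where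
  "formulation_sym k t N \<pi> \<longleftrightarrow> bij_betw \<pi> (pm_vecs k) (pm_vecs k) \<and>
     (\<forall>z\<in>pm_vecs k. ilp_obj (\<pi> z) = ilp_obj z) \<and>
     sys_sym (pm_vecs k) \<pi> (UNIV :: unit set) eq_A (eq_b N) \<and>
     sys_sym (pm_vecs k) \<pi> (ineq_rows k t) ineq_A ineq_b"

definition isomorphic_OA :: "nat \<Rightarrow> int list list \<Rightarrow> int list list \<Rightarrow> bool" where
  "isomorphic_OA k X Y \<longleftrightarrow> (\<exists>h\<in>G_iso k. mset Y = image_mset h (mset X))"

definition aug :: "int list list \<Rightarrow> int list list" where
  "aug X = map (\<lambda>r. 1 # r) X"

definition OD_equiv :: "nat \<Rightarrow> int list list \<Rightarrow> int list list \<Rightarrow> bool" where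
  "OD_equiv k X Y \<longleftrightarrow> length X = length Y \<and>
     (\<exists>\<rho> \<sigma> a b. \<rho> permutes {..<length X} \<and> \<sigma> permutes {..<Suc k} \<and>
        (\<forall>i<length X. a i \<in> {1, -1}) \<and> (\<forall>j<Suc k. b j \<in> {1, -1}) \<and>
        (\<forall>i<length X. \<forall>j<Suc k. aug Y ! i ! j = a i * b j * aug X ! (\<rho> i) ! (\<sigma> j)))"

end

theory Submission
  imports Defs
begin

(* Each generator g permutes the monomials z_S = prod_{i in S} z_i up to sign: a sign change or a
   coordinate permutation sends z_S to +-z_{sigma S}, and R_i sends z_S to z_{S'}, where S' toggles i
   when |S - {i}| is odd.  The toggle keeps 1 <= |S'| <= t precisely when t is even.  Hence g
   permutes the rows of M and -M.

   Applying g to every row of an OA again gives an OA: the number of rows agreeing with a tuple u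
   on t columns S becomes a count of the same kind, except for R_i with i outside S, where it
   becomes the sum of the counts of two (t+1)-tuples on the columns S and i that differ in all
   positions.  In an OA of strength t, flipping one entry of a (t+1)-tuple turns its count c into
   N/2^t - c, so flipping the odd number t+1 of entries makes the two counts add up to N/2^t.
   Every generator is a signed column permutation of [1,X]; for R_i, multiply each row by its i-th
   entry and swap the column of ones with column i.  All these properties are stable under
   composition, so they pass from the generators to the groups. *)

lemma pm_vecs_iff: "z \<in> pm_vecs k \<longleftrightarrow> length z = k \<and> (\<forall>j<k. z ! j = 1 \<or> z ! j = -1)"
  unfolding pm_vecs_def by (auto simp: in_set_conv_nth subset_iff)

lemma pm_vecs_length: "z \<in> pm_vecs k \<Longrightarrow> length z = k"
  by (simp add: pm_vecs_iff)

lemma pm_vecs_nth: "z \<in> pm_vecs k \<Longrightarrow> j < k \<Longrightarrow> z ! j = 1 \<or> z ! j = -1"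
  by (simp add: pm_vecs_iff)

lemma length_filter_split:
  "length (filter P xs) = length (filter (\<lambda>x. P x \<and> Q x) xs) + length (filter (\<lambda>x. P x \<and> \<not> Q x) xs)"
  by (induction xs) auto

lemma bij_betw_involution:
  assumes "\<And>z. z \<in> V \<Longrightarrow> f z \<in> V" and "\<And>z. z \<in> V \<Longrightarrow> f (f z) = z"
  shows "bij_betw f V V"
  using assms by (intro bij_betw_byWitness[where f' = f]) auto

section \<open>Rows of an array agreeing with a tuple\<close>

definition agree_count :: "int list list \<Rightarrow> nat set \<Rightarrow> int list \<Rightarrow> nat" where
  "agree_count X S u = length (filter (\<lambda>r. \<forall>i\<in>S. r ! i = u ! i) X)"

lemma is_OA_iff_agree_count:
  "is_OA N k t X \<longleftrightarrow> length X = N \<and> set X \<subseteq> pm_vecs k \<and>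
     (\<forall>S u. S \<subseteq> {..<k} \<longrightarrow> card S = t \<longrightarrow> u \<in> pm_vecs k \<longrightarrow> 2 ^ t * agree_count X S u = N)"
  unfolding is_OA_def agree_count_def by blast

lemma OA_agree_count:
  "is_OA N k t X \<Longrightarrow> S \<subseteq> {..<k} \<Longrightarrow> card S = t \<Longrightarrow> u \<in> pm_vecs k \<Longrightarrow> 2 ^ t * agree_count X S u = N"
  unfolding is_OA_iff_agree_count by blast

lemma OA_rows: "is_OA N k t X \<Longrightarrow> set X \<subseteq> pm_vecs k"
  unfolding is_OA_def by blast

lemma agree_count_cong: "(\<And>j. j \<in> S \<Longrightarrow> v ! j = u ! j) \<Longrightarrow> agree_count X S v = agree_count X S u"
  unfolding agree_count_def by (simp cong: filter_cong)

lemma agree_count_map_eq: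
  assumes "\<And>r. r \<in> set X \<Longrightarrow> (\<forall>j\<in>S. g r ! j = u ! j) \<longleftrightarrow> (\<forall>j\<in>S'. r ! j = u' ! j)"
  shows "agree_count (map g X) S u = agree_count X S' u'"
  unfolding agree_count_def filter_map o_def length_map using assms by (simp cong: filter_cong)

lemma is_OA_map:
  assumes "is_OA N k t X" and "\<And>z. z \<in> pm_vecs k \<Longrightarrow> g z \<in> pm_vecs k"
    and "\<And>S u. S \<subseteq> {..<k} \<Longrightarrow> card S = t \<Longrightarrow> u \<in> pm_vecs k \<Longrightarrow> 2 ^ t * agree_count (map g X) S u = N"
  shows "is_OA N k t (map g X)"
  using assms unfolding is_OA_iff_agree_count by auto

lemma sign_change_nth: "j < length u \<Longrightarrow> sign_change i u ! j = (if j = i then - u ! i else u ! j)"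
  unfolding sign_change_def by simp

lemma length_sign_change [simp]: "length (sign_change i u) = length u"
  unfolding sign_change_def by simp

lemma sign_change_sign_change [simp]: "sign_change i (sign_change i u) = u"
  unfolding sign_change_def by (cases "i < length u") (auto simp: list_update_beyond)

lemma sign_change_pm_vecs: "u \<in> pm_vecs k \<Longrightarrow> sign_change i u \<in> pm_vecs k"
  unfolding pm_vecs_iff by (auto simp: sign_change_nth)

lemma agree_count_remove:
  assumes X: "set X \<subseteq> pm_vecs k" and T: "T \<subseteq> {..<k}" and j: "j \<in> T" and u: "u \<in> pm_vecs k"
  shows "agree_count X (T - {j}) u = agree_count X T u + agree_count X T (sign_change j u)"
  unfolding agree_count_def
proof (subst length_filter_split[where Q = "\<lambda>r. r ! j = u ! j"], intro arg_cong2[where f = "(+)"])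
  have jk: "j < k" and ul: "length u = k" using T j u pm_vecs_length by auto
  have "((\<forall>i\<in>T - {j}. r ! i = u ! i) \<and> r ! j = u ! j) \<longleftrightarrow> (\<forall>i\<in>T. r ! i = u ! i)" for r
    using j by blast
  then show "length (filter (\<lambda>r. (\<forall>i\<in>T - {j}. r ! i = u ! i) \<and> r ! j = u ! j) X) =
      length (filter (\<lambda>r. \<forall>i\<in>T. r ! i = u ! i) X)"
    by simp
  have "((\<forall>i\<in>T - {j}. r ! i = u ! i) \<and> r ! j \<noteq> u ! j) \<longleftrightarrow> (\<forall>i\<in>T. r ! i = sign_change j u ! i)"
    if "r \<in> set X" for r
    using pm_vecs_nth[of r k j] pm_vecs_nth[OF u jk] that X j T ul
    by (auto simp: sign_change_nth subset_iff)
  then show "length (filter (\<lambda>r. (\<forall>i\<in>T - {j}. r ! i = u ! i) \<and> r ! j \<noteq> u ! j) X) =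
      length (filter (\<lambda>r. \<forall>i\<in>T. r ! i = sign_change j u ! i) X)"
    by (simp cong: filter_cong)
qed

lemma OA_agree_count_sign_change:
  assumes X: "is_OA N k t X" and T: "T \<subseteq> {..<k}" "card T = Suc t" and j: "j \<in> T"
    and u: "u \<in> pm_vecs k"
  shows "2 ^ t * (agree_count X T u + agree_count X T (sign_change j u)) = N"
proof -
  have "T - {j} \<subseteq> {..<k}" and "card (T - {j}) = t" using T j by auto
  from OA_agree_count[OF X this u] show ?thesis
    by (simp add: agree_count_remove[OF OA_rows[OF X] T(1) j u])
qed

(* Flipping one entry turns a count c into N/2^t - c, that is, it negates 2^(t+1) c - N. *)
lemma OA_agree_count_flip:
  assumes X: "is_OA N k t X" and T: "T \<subseteq> {..<k}" "card T = Suc t" and E: "E \<subseteq> T"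
    and u: "u \<in> pm_vecs k" and v: "v \<in> pm_vecs k"
    and uv: "\<And>j. j \<in> T \<Longrightarrow> v ! j = (if j \<in> E then - u ! j else u ! j)"
  shows "int (2 ^ Suc t * agree_count X T v) - int N =
    (-1) ^ card E * (int (2 ^ Suc t * agree_count X T u) - int N)"
proof -
  have "finite E" using finite_subset[OF E] finite_subset[OF T(1)] by blast
  then show ?thesis using E v uv
  proof (induction E arbitrary: v rule: finite_induct)
    case empty
    then show ?case using agree_count_cong[of T v u X] by simp
  next
    case (insert x F)
    define v' where "v' = sign_change x v"
    have x: "x \<in> T" "x < k" using insert.prems(1) T(1) by auto
    have "F \<subseteq> T" using insert.prems(1) by simp
    moreover have "v' \<in> pm_vecs k" using insert.prems(2) by (simp add: v'_def sign_change_pm_vecs)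
    moreover have "v' ! j = (if j \<in> F then - u ! j else u ! j)" if "j \<in> T" for j
      using insert.prems(3)[OF that] insert.hyps(2) that T(1) x pm_vecs_length[OF insert.prems(2)]
      by (auto simp: v'_def sign_change_nth subset_iff)
    ultimately have IH: "int (2 ^ Suc t * agree_count X T v') - int N =
        (-1) ^ card F * (int (2 ^ Suc t * agree_count X T u) - int N)"
      by (rule insert.IH)
    have "2 ^ t * (agree_count X T v + agree_count X T v') = N"
      unfolding v'_def by (rule OA_agree_count_sign_change[OF X T x(1) insert.prems(2)])
    then have "2 ^ Suc t * agree_count X T v + 2 ^ Suc t * agree_count X T v' = 2 * N"
      by (simp only: power_Suc mult.assoc distrib_left[symmetric])
    then have "int (2 ^ Suc t * agree_count X T v) - int N = - (int (2 ^ Suc t * agree_count X T v') - int N)"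
      by linarith
    then show ?case using IH insert.hyps by simp
  qed
qed

lemma OD_equiv_map:
  assumes \<sigma>: "\<sigma> permutes {..<Suc k}" and b: "\<And>j. j < Suc k \<Longrightarrow> b j \<in> {1, -1}"
    and a: "\<And>r. r \<in> set X \<Longrightarrow> a r \<in> {1, -1}"
    and g: "\<And>r j. r \<in> set X \<Longrightarrow> j < Suc k \<Longrightarrow> (1 # g r) ! j = a r * b j * (1 # r) ! \<sigma> j"
  shows "OD_equiv k X (map g X)"
  unfolding OD_equiv_def
proof (intro conjI exI)
  show "id permutes {..<length X}" by (rule permutes_id)
  show "\<forall>i<length X. a (X ! i) \<in> {1, -1}" using a by simp
  show "\<forall>i<length X. \<forall>j<Suc k. aug (map g X) ! i ! j = a (X ! i) * b j * aug X ! id i ! \<sigma> j"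
    using g by (simp add: aug_def)
qed (use \<sigma> b in auto)

lemma OD_equiv_refl: "OD_equiv k X X"
  using OD_equiv_map[of id k "\<lambda>_. 1" X "\<lambda>_. 1" id] permutes_id by simp

lemma OD_equiv_trans:
  assumes "OD_equiv k X Y" and "OD_equiv k Y Z"
  shows "OD_equiv k X Z"
proof -
  obtain \<rho>1 \<sigma>1 a1 b1 where 1: "length X = length Y" "\<rho>1 permutes {..<length X}" "\<sigma>1 permutes {..<Suc k}"
    "\<forall>i<length X. a1 i \<in> {1, -1}" "\<forall>j<Suc k. b1 j \<in> {1, -1}"
    "\<forall>i<length X. \<forall>j<Suc k. aug Y ! i ! j = a1 i * b1 j * aug X ! \<rho>1 i ! \<sigma>1 j"
    using assms(1) unfolding OD_equiv_def by blast
  obtain \<rho>2 \<sigma>2 a2 b2 where 2: "length Y = length Z" "\<rho>2 permutes {..<length Y}" "\<sigma>2 permutes {..<Suc k}"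
    "\<forall>i<length Y. a2 i \<in> {1, -1}" "\<forall>j<Suc k. b2 j \<in> {1, -1}"
    "\<forall>i<length Y. \<forall>j<Suc k. aug Z ! i ! j = a2 i * b2 j * aug Y ! \<rho>2 i ! \<sigma>2 j"
    using assms(2) unfolding OD_equiv_def by blast
  have \<rho>2: "\<rho>2 i < length X" if "i < length X" for i
    using permutes_in_image[OF 2(2)] that 1(1) by auto
  have \<sigma>2: "\<sigma>2 j < Suc k" if "j < Suc k" for j
    using permutes_in_image[OF 2(3)] that by auto
  have sign: "x * y \<in> {1, -1}" if "x \<in> {1, -1}" "y \<in> {1, -1}" for x y :: int
    using that by auto
  show ?thesis
    unfolding OD_equiv_def
  proof (intro conjI exI)
    show "length X = length Z" using 1(1) 2(1) by simp
    show "\<rho>1 \<circ> \<rho>2 permutes {..<length X}" using permutes_compose[OF 2(2)[folded 1(1)] 1(2)] .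
    show "\<sigma>1 \<circ> \<sigma>2 permutes {..<Suc k}" using permutes_compose[OF 2(3) 1(3)] .
    show "\<forall>i<length X. a2 i * a1 (\<rho>2 i) \<in> {1, -1}" using 1(1,4) 2(4) \<rho>2 sign by simp
    show "\<forall>j<Suc k. b2 j * b1 (\<sigma>2 j) \<in> {1, -1}" using 1(5) 2(5) \<sigma>2 sign by simp
    show "\<forall>i<length X. \<forall>j<Suc k. aug Z ! i ! j =
        a2 i * a1 (\<rho>2 i) * (b2 j * b1 (\<sigma>2 j)) * aug X ! (\<rho>1 \<circ> \<rho>2) i ! (\<sigma>1 \<circ> \<sigma>2) j"
      using 1(1,6) 2(6) \<rho>2 \<sigma>2 by (simp add: algebra_simps)
  qed
qed

lemma sys_sym_comp:
  assumes "sys_sym V f R A b" and "sys_sym V g R A b" and "g ` V \<subseteq> V"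
  shows "sys_sym V (f \<circ> g) R A b"
proof -
  obtain \<rho>1 where \<rho>1: "bij_betw \<rho>1 R R" "\<forall>r\<in>R. b (\<rho>1 r) = b r \<and> (\<forall>z\<in>V. A (\<rho>1 r) (f z) = A r z)"
    using assms(1) unfolding sys_sym_def by blast
  obtain \<rho>2 where \<rho>2: "bij_betw \<rho>2 R R" "\<forall>r\<in>R. b (\<rho>2 r) = b r \<and> (\<forall>z\<in>V. A (\<rho>2 r) (g z) = A r z)"
    using assms(2) unfolding sys_sym_def by blast
  have "\<rho>2 r \<in> R" if "r \<in> R" for r using bij_betwE[OF \<rho>2(1)] that by blast
  then show ?thesis
    unfolding sys_sym_def using bij_betw_trans[OF \<rho>2(1) \<rho>1(1)] \<rho>1(2) \<rho>2(2) assms(3)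
    by (intro exI[of _ "\<rho>1 \<circ> \<rho>2"]) auto
qed

lemma sys_sym_trivial:
  assumes "\<And>r z. r \<in> R \<Longrightarrow> z \<in> V \<Longrightarrow> A r (\<pi> z) = A r z"
  shows "sys_sym V \<pi> R A b"
  unfolding sys_sym_def using assms by (intro exI[of _ id]) auto

lemma bij_betw_ineq_rows:
  assumes \<tau>: "bij_betw \<tau> (M_subsets k t) (M_subsets k t)"
    and \<epsilon>: "\<And>S. S \<in> M_subsets k t \<Longrightarrow> \<epsilon> S \<in> {1, -1}"
  shows "bij_betw (\<lambda>(S, s). (\<tau> S, \<epsilon> S * s)) (ineq_rows k t) (ineq_rows k t)"
    (is "bij_betw ?\<rho> _ _")
proof (rule bij_betw_imageI)
  show "inj_on ?\<rho> (ineq_rows k t)"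
  proof (rule inj_onI)
    fix r1 r2 assume r: "r1 \<in> ineq_rows k t" "r2 \<in> ineq_rows k t" and eq: "?\<rho> r1 = ?\<rho> r2"
    obtain S1 s1 S2 s2 where r12: "r1 = (S1, s1)" "r2 = (S2, s2)" by fastforce
    have S: "S1 \<in> M_subsets k t" "S2 \<in> M_subsets k t" using r r12 by (auto simp: ineq_rows_def)
    have "S1 = S2" using eq r12 bij_betw_imp_inj_on[OF \<tau>] S by (auto dest: inj_onD)
    moreover have "s1 = s2" using eq r12 \<epsilon>[OF S(1)] calculation by auto
    ultimately show "r1 = r2" using r12 by simp
  qed
  show "?\<rho> ` ineq_rows k t = ineq_rows k t"
  proof
    show "?\<rho> ` ineq_rows k t \<subseteq> ineq_rows k t"
    proof clarify
      fix S s assume "(S, s) \<in> ineq_rows k t"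
      then have S: "S \<in> M_subsets k t" and s: "s \<in> {1, -1}" by (auto simp: ineq_rows_def)
      show "(\<tau> S, \<epsilon> S * s) \<in> ineq_rows k t"
        using bij_betwE[OF \<tau>] S s \<epsilon>[OF S] by (auto simp: ineq_rows_def)
    qed
    show "ineq_rows k t \<subseteq> ?\<rho> ` ineq_rows k t"
    proof
      fix r assume "r \<in> ineq_rows k t"
      then obtain S' s where r: "r = (S', s)" "S' \<in> M_subsets k t" "s \<in> {1, -1}"
        by (auto simp: ineq_rows_def)
      then obtain S where S: "S \<in> M_subsets k t" "S' = \<tau> S"
        using bij_betw_imp_surj_on[OF \<tau>] by blast
      then have "r = ?\<rho> (S, \<epsilon> S * s)" and "(S, \<epsilon> S * s) \<in> ineq_rows k t"
        using r \<epsilon>[OF S(1)] by (auto simp: ineq_rows_def)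
      then show "r \<in> ?\<rho> ` ineq_rows k t" by blast
    qed
  qed
qed

lemma sys_sym_ineq_rows:
  assumes \<tau>: "bij_betw \<tau> (M_subsets k t) (M_subsets k t)"
    and \<epsilon>: "\<And>S. S \<in> M_subsets k t \<Longrightarrow> \<epsilon> S \<in> {1, -1}"
    and g: "\<And>S z. S \<in> M_subsets k t \<Longrightarrow> z \<in> pm_vecs k \<Longrightarrow> M_row (\<tau> S) (g z) = \<epsilon> S * M_row S z"
  shows "sys_sym (pm_vecs k) g (ineq_rows k t) ineq_A ineq_b"
  unfolding sys_sym_def
proof (intro exI conjI ballI)
  show "bij_betw (\<lambda>(S, s). (\<tau> S, \<epsilon> S * s)) (ineq_rows k t) (ineq_rows k t)"
    using bij_betw_ineq_rows[OF \<tau> \<epsilon>] .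
  fix r assume "r \<in> ineq_rows k t"
  then obtain S s where r: "r = (S, s)" "S \<in> M_subsets k t" by (auto simp: ineq_rows_def)
  have "\<epsilon> S * \<epsilon> S = 1" using \<epsilon>[OF r(2)] by auto
  then show "ineq_A ((\<lambda>(S, s). (\<tau> S, \<epsilon> S * s)) r) (g z) = ineq_A r z" if "z \<in> pm_vecs k" for z
    using g[OF r(2) that] r(1) by (simp add: ineq_A_def algebra_simps)
  show "ineq_b ((\<lambda>(S, s). (\<tau> S, \<epsilon> S * s)) r) = ineq_b r" by (simp add: ineq_b_def)
qed

section \<open>Symmetries of ILP (M) that preserve orthogonal arrays\<close>

definition OD_symmetry :: "nat \<Rightarrow> nat \<Rightarrow> nat \<Rightarrow> (int list \<Rightarrow> int list) \<Rightarrow> bool" where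
  "OD_symmetry N k t g \<longleftrightarrow> bij_betw g (pm_vecs k) (pm_vecs k) \<and>
     sys_sym (pm_vecs k) g (ineq_rows k t) ineq_A ineq_b \<and>
     (\<forall>X. is_OA N k t X \<longrightarrow> is_OA N k t (map g X) \<and> OD_equiv k X (map g X))"

lemma OD_symmetry_id: "OD_symmetry N k t id"
  unfolding OD_symmetry_def using OD_equiv_refl by (simp add: sys_sym_trivial)

lemma OD_symmetry_comp:
  assumes g: "OD_symmetry N k t g" and h: "OD_symmetry N k t h"
  shows "OD_symmetry N k t (g \<circ> h)"
proof -
  have bij: "bij_betw g (pm_vecs k) (pm_vecs k)" "bij_betw h (pm_vecs k) (pm_vecs k)"
    using g h unfolding OD_symmetry_def by blast+
  have "sys_sym (pm_vecs k) (g \<circ> h) (ineq_rows k t) ineq_A ineq_b"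
    using g h bij_betw_imp_surj_on[OF bij(2)] unfolding OD_symmetry_def by (blast intro: sys_sym_comp)
  moreover have "is_OA N k t (map (g \<circ> h) X) \<and> OD_equiv k X (map (g \<circ> h) X)" if "is_OA N k t X" for X
    using g h that OD_equiv_trans unfolding OD_symmetry_def by (metis map_map)
  ultimately show ?thesis using bij_betw_trans[OF bij(2,1)] unfolding OD_symmetry_def by blast
qed

lemma OD_symmetry_gen_by:
  assumes "g \<in> gen_by gens" and "\<And>h. h \<in> gens \<Longrightarrow> OD_symmetry N k t h"
  shows "OD_symmetry N k t g"
  using assms by induction (auto intro: OD_symmetry_id OD_symmetry_comp)

lemma OD_symmetry_imp_formulation_sym:
  assumes "OD_symmetry N k t g"
  shows "formulation_sym k t N g"
  using assms sys_sym_trivial[of UNIV "pm_vecs k" eq_A g "eq_b N"]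
  unfolding formulation_sym_def OD_symmetry_def by (simp add: eq_A_def ilp_obj_def)

lemma freq_map:
  assumes X: "set X \<subseteq> pm_vecs k" and g: "bij_betw g (pm_vecs k) (pm_vecs k)"
  shows "freq (map g X) = act k g (freq X)"
proof
  fix w
  have inj: "inj_on g (pm_vecs k)" using bij_betw_imp_inj_on[OF g] .
  show "freq (map g X) w = act k g (freq X) w"
  proof (cases "w \<in> pm_vecs k")
    case True
    define z where "z = the_inv_into (pm_vecs k) g w"
    have "w \<in> g ` pm_vecs k" using True bij_betw_imp_surj_on[OF g] by blast
    then have z: "z \<in> pm_vecs k" "g z = w"
      using the_inv_into_into[OF inj] f_the_inv_into_f[OF inj] unfolding z_def by auto
    have "g -` {w} \<inter> set X = {z} \<inter> set X"
      using X z inj by (auto dest: inj_onD)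
    then have "freq (map g X) w = (\<Sum>y\<in>{z} \<inter> set X. count (mset X) y)"
      unfolding freq_def by (simp add: count_image_mset)
    also have "\<dots> = count (mset X) z" by (cases "z \<in> set X") auto
    finally show ?thesis using True unfolding act_def freq_def z_def by simp
  next
    case False
    then have "w \<notin> set (map g X)" using X bij_betwE[OF g] by auto
    then show ?thesis using False unfolding act_def freq_def by (simp add: count_eq_zero_iff)
  qed
qed

section \<open>Sign changes and coordinate permutations\<close>

lemma sign_change_nth_mult:
  "i < length z \<Longrightarrow> sign_change i z ! j = (if j = i then -1 else 1) * z ! j"
  unfolding sign_change_def by simp

lemma M_row_sign_change:
  assumes "finite S" and "i < length z"
  shows "M_row S (sign_change i z) = (if i \<in> S then -1 else 1) * M_row S z"
  using assms by (simp add: M_row_def sign_change_nth_mult prod.distrib prod.delta)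

lemma is_OA_map_sign_change:
  assumes X: "is_OA N k t X"
  shows "is_OA N k t (map (sign_change i) X)"
proof (rule is_OA_map[OF X sign_change_pm_vecs])
  fix S u assume S: "S \<subseteq> {..<k}" "card S = t" and u: "u \<in> pm_vecs k"
  have "agree_count (map (sign_change i) X) S u = agree_count X S (sign_change i u)"
  proof (rule agree_count_map_eq)
    fix r assume "r \<in> set X"
    then have "length r = k" using OA_rows[OF X] pm_vecs_length by blast
    then show "(\<forall>j\<in>S. sign_change i r ! j = u ! j) \<longleftrightarrow> (\<forall>j\<in>S. r ! j = sign_change i u ! j)"
      using S(1) pm_vecs_length[OF u] by (auto simp: sign_change_nth subset_iff)
  qed
  then show "2 ^ t * agree_count (map (sign_change i) X) S u = N"
    using OA_agree_count[OF X S sign_change_pm_vecs[OF u]] by simp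
qed

lemma OD_equiv_map_sign_change:
  assumes X: "set X \<subseteq> pm_vecs k" and i: "i < k"
  shows "OD_equiv k X (map (sign_change i) X)"
proof (rule OD_equiv_map[where \<sigma> = id and a = "\<lambda>_. 1" and b = "\<lambda>j. if j = Suc i then -1 else 1"])
  fix r j assume "r \<in> set X" "j < Suc k"
  then show "(1 # sign_change i r) ! j = 1 * (if j = Suc i then -1 else 1) * (1 # r) ! id j"
    using X pm_vecs_length i by (cases j) (auto simp: sign_change_nth_mult)
qed simp_all

lemma OD_symmetry_sign_change:
  assumes i: "i < k"
  shows "OD_symmetry N k t (sign_change i)"
  unfolding OD_symmetry_def
proof (intro conjI allI impI)
  show "bij_betw (sign_change i) (pm_vecs k) (pm_vecs k)"
    by (rule bij_betw_involution) (simp_all add: sign_change_pm_vecs)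
  show "sys_sym (pm_vecs k) (sign_change i) (ineq_rows k t) ineq_A ineq_b"
  proof (rule sys_sym_ineq_rows[where \<tau> = id])
    fix S z assume "S \<in> M_subsets k t" "z \<in> pm_vecs k"
    then show "M_row (id S) (sign_change i z) = (if i \<in> S then -1 else 1) * M_row S z"
      using i finite_subset[of S "{..<k}"] pm_vecs_length[of z k] M_row_sign_change[of S i z]
      by (auto simp: M_subsets_def)
  qed simp_all
  fix X assume "is_OA N k t X"
  then show "is_OA N k t (map (sign_change i) X)" and "OD_equiv k X (map (sign_change i) X)"
    using is_OA_map_sign_change OD_equiv_map_sign_change[OF OA_rows i] by blast+
qed

lemma length_coord_perm [simp]: "length (coord_perm k \<sigma> z) = k"
  unfolding coord_perm_def by simp

lemma coord_perm_nth: "j < k \<Longrightarrow> coord_perm k \<sigma> z ! j = z ! \<sigma> j"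
  unfolding coord_perm_def by simp

lemma coord_perm_pm_vecs: "\<sigma> permutes {..<k} \<Longrightarrow> z \<in> pm_vecs k \<Longrightarrow> coord_perm k \<sigma> z \<in> pm_vecs k"
  unfolding pm_vecs_iff using permutes_in_image[of \<sigma> "{..<k}"] by (auto simp: coord_perm_nth)

lemma coord_perm_inv:
  assumes "\<sigma> permutes {..<k}" and "length z = k"
  shows "coord_perm k (inv \<sigma>) (coord_perm k \<sigma> z) = z"
  using assms permutes_in_image[OF permutes_inv[OF assms(1)]]
  by (intro nth_equalityI) (auto simp: coord_perm_nth permutes_inverses)

lemma M_row_coord_perm:
  assumes "\<sigma> permutes {..<k}" and "S \<subseteq> {..<k}"
  shows "M_row S (coord_perm k \<sigma> z) = M_row (\<sigma> ` S) z"
proof -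
  have "M_row (\<sigma> ` S) z = (\<Prod>j\<in>S. z ! \<sigma> j)"
    unfolding M_row_def using permutes_inj_on[OF assms(1)] by (simp add: prod.reindex)
  also have "\<dots> = M_row S (coord_perm k \<sigma> z)"
    unfolding M_row_def using assms(2) by (intro prod.cong) (auto simp: coord_perm_nth)
  finally show ?thesis by simp
qed

lemma permutes_image_M_subsets:
  assumes "\<sigma> permutes {..<k}" and "S \<in> M_subsets k t"
  shows "\<sigma> ` S \<in> M_subsets k t"
proof -
  have "card (\<sigma> ` S) = card S" using card_image[OF permutes_inj_on[OF assms(1)]] .
  moreover have "\<sigma> ` S \<subseteq> {..<k}" using assms permutes_in_image[OF assms(1)] by (auto simp: M_subsets_def)
  ultimately show ?thesis using assms(2) by (simp add: M_subsets_def)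
qed

lemma permutes_Suc_shift:
  assumes \<sigma>: "\<sigma> permutes {..<k}"
  shows "case_nat 0 (Suc \<circ> \<sigma>) permutes {..<Suc k}"
proof (rule inj_imp_permutes)
  show "inj_on (case_nat 0 (Suc \<circ> \<sigma>)) {..<Suc k}"
  proof (rule inj_onI)
    fix i j assume "case_nat 0 (Suc \<circ> \<sigma>) i = case_nat 0 (Suc \<circ> \<sigma>) j"
    then show "i = j"
      using permutes_inj[OF \<sigma>] by (cases i; cases j) (simp_all add: inj_eq)
  qed
  show "case_nat 0 (Suc \<circ> \<sigma>) j \<in> {..<Suc k}" if "j \<in> {..<Suc k}" for j
  proof (cases j)
    case (Suc m)
    then have "\<sigma> m \<in> {..<k}" using that permutes_in_image[OF \<sigma>, of m] by simp
    then show ?thesis using Suc by simp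
  qed simp
  show "case_nat 0 (Suc \<circ> \<sigma>) j = j" if "j \<notin> {..<Suc k}" for j
  proof (cases j)
    case (Suc m)
    then have "\<sigma> m = m" using that permutes_not_in[OF \<sigma>, of m] by simp
    then show ?thesis using Suc by simp
  qed simp
qed simp

lemma is_OA_map_coord_perm:
  assumes X: "is_OA N k t X" and \<sigma>: "\<sigma> permutes {..<k}"
  shows "is_OA N k t (map (coord_perm k \<sigma>) X)"
proof (rule is_OA_map[OF X coord_perm_pm_vecs[OF \<sigma>]])
  fix S u assume S: "S \<subseteq> {..<k}" "card S = t" and u: "u \<in> pm_vecs k"
  have S': "\<sigma> ` S \<subseteq> {..<k}" "card (\<sigma> ` S) = t"
    using S card_image[OF permutes_inj_on[OF \<sigma>]] permutes_in_image[OF \<sigma>] by auto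
  have "agree_count (map (coord_perm k \<sigma>) X) S u = agree_count X (\<sigma> ` S) (coord_perm k (inv \<sigma>) u)"
    by (rule agree_count_map_eq)
      (use S(1) S'(1) in \<open>auto simp: coord_perm_nth subset_iff permutes_inverses[OF \<sigma>]\<close>)
  then show "2 ^ t * agree_count (map (coord_perm k \<sigma>) X) S u = N"
    using OA_agree_count[OF X S' coord_perm_pm_vecs[OF permutes_inv[OF \<sigma>] u]] by simp
qed

lemma OD_equiv_map_coord_perm:
  assumes \<sigma>: "\<sigma> permutes {..<k}"
  shows "OD_equiv k X (map (coord_perm k \<sigma>) X)"
proof (rule OD_equiv_map[where \<sigma> = "case_nat 0 (Suc \<circ> \<sigma>)" and a = "\<lambda>_. 1" and b = "\<lambda>_. 1"])
  fix r j assume "j < Suc k"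
  then show "(1 # coord_perm k \<sigma> r) ! j = 1 * 1 * (1 # r) ! case_nat 0 (Suc \<circ> \<sigma>) j"
    by (cases j) (auto simp: coord_perm_nth)
qed (simp_all add: permutes_Suc_shift[OF \<sigma>])

lemma OD_symmetry_coord_perm:
  assumes \<sigma>: "\<sigma> permutes {..<k}"
  shows "OD_symmetry N k t (coord_perm k \<sigma>)"
  unfolding OD_symmetry_def
proof (intro conjI allI impI)
  have \<sigma>': "inv \<sigma> permutes {..<k}" using permutes_inv[OF \<sigma>] .
  show "bij_betw (coord_perm k \<sigma>) (pm_vecs k) (pm_vecs k)"
    using coord_perm_pm_vecs[OF \<sigma>] coord_perm_pm_vecs[OF \<sigma>'] coord_perm_inv[OF \<sigma>]
      coord_perm_inv[OF \<sigma>', unfolded permutes_inv_inv[OF \<sigma>]] pm_vecs_length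
    by (intro bij_betw_byWitness[where f' = "coord_perm k (inv \<sigma>)"]) auto
  show "sys_sym (pm_vecs k) (coord_perm k \<sigma>) (ineq_rows k t) ineq_A ineq_b"
  proof (rule sys_sym_ineq_rows[where \<tau> = "image (inv \<sigma>)" and \<epsilon> = "\<lambda>_. 1"])
    show "bij_betw (image (inv \<sigma>)) (M_subsets k t) (M_subsets k t)"
      using permutes_image_M_subsets[OF \<sigma>] permutes_image_M_subsets[OF \<sigma>']
      by (intro bij_betw_byWitness[where f' = "image \<sigma>"]) (auto simp: image_comp permutes_inv_o[OF \<sigma>])
    fix S z assume "S \<in> M_subsets k t"
    then have "inv \<sigma> ` S \<subseteq> {..<k}"
      using permutes_image_M_subsets[OF \<sigma>', of S t] by (simp add: M_subsets_def)
    then show "M_row (inv \<sigma> ` S) (coord_perm k \<sigma> z) = 1 * M_row S z"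
      using M_row_coord_perm[OF \<sigma>] by (simp add: image_comp permutes_inv_o[OF \<sigma>])
  qed simp
  fix X assume "is_OA N k t X"
  then show "is_OA N k t (map (coord_perm k \<sigma>) X)" and "OD_equiv k X (map (coord_perm k \<sigma>) X)"
    using is_OA_map_coord_perm[OF _ \<sigma>] OD_equiv_map_coord_perm[OF \<sigma>] by blast+
qed

section \<open>The operations R_i\<close>

lemma length_R_op [simp]: "length (R_op k i z) = k"
  unfolding R_op_def by simp

lemma R_op_nth: "j < k \<Longrightarrow> R_op k i z ! j = (if j = i then z ! i else z ! j * z ! i)"
  unfolding R_op_def by simp

lemma R_op_pm_vecs:
  assumes "i < k" and "z \<in> pm_vecs k"
  shows "R_op k i z \<in> pm_vecs k"
proof -
  have "R_op k i z ! j = 1 \<or> R_op k i z ! j = -1" if "j < k" for j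
    using pm_vecs_nth[OF assms(2) that] pm_vecs_nth[OF assms(2) assms(1)] that by (auto simp: R_op_nth)
  then show ?thesis unfolding pm_vecs_iff by simp
qed

lemma R_op_R_op:
  assumes "i < k" and "z \<in> pm_vecs k"
  shows "R_op k i (R_op k i z) = z"
proof (rule nth_equalityI)
  show "length (R_op k i (R_op k i z)) = length z" using pm_vecs_length[OF assms(2)] by simp
  have "z ! i = 1 \<or> z ! i = -1" using pm_vecs_nth assms by blast
  then show "R_op k i (R_op k i z) ! j = z ! j" if "j < length (R_op k i (R_op k i z))" for j
    using that assms(1) by (auto simp: R_op_nth)
qed

lemma M_row_R_op:
  assumes "S \<subseteq> {..<k}"
  shows "M_row S (R_op k i z) = z ! i ^ card S * M_row (S - {i}) z"
proof -
  have fin: "finite S" using finite_subset[OF assms] by blast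
  have "M_row S (R_op k i z) = (\<Prod>j\<in>S. z ! i * (if j = i then 1 else z ! j))"
    unfolding M_row_def using assms by (intro prod.cong) (auto simp: R_op_nth)
  also have "\<dots> = z ! i ^ card S * (\<Prod>j\<in>S. if j = i then 1 else z ! j)"
    by (simp add: prod.distrib)
  also have "(\<Prod>j\<in>S. if j = i then 1 else z ! j) = M_row (S - {i}) z"
    unfolding M_row_def using fin by (simp add: prod.If_cases Diff_eq)
  finally show ?thesis .
qed

lemma M_row_remove:
  "finite S \<Longrightarrow> M_row S z = (if i \<in> S then z ! i else 1) * M_row (S - {i}) z"
  unfolding M_row_def by (simp add: prod.remove)

(* (R_i z)_S = z_i^|S| z_(S - {i}) and z_i^2 = 1, so i has to be toggled exactly when |S - {i}| is odd. *)
definition R_subset :: "nat \<Rightarrow> nat set \<Rightarrow> nat set" where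
  "R_subset i S = (if odd (card (S - {i})) then (if i \<in> S then S - {i} else insert i S) else S)"

lemma R_subset_Diff [simp]: "R_subset i S - {i} = S - {i}"
  unfolding R_subset_def by auto

lemma R_subset_R_subset [simp]: "R_subset i (R_subset i S) = S"
  unfolding R_subset_def by (auto simp: insert_absorb)

lemma odd_card_R_subset:
  assumes "finite S"
  shows "odd (card (R_subset i S)) \<longleftrightarrow> i \<in> S"
  using assms by (auto simp: R_subset_def card_Suc_Diff1)

lemma R_subset_M_subsets:
  assumes t: "even t" and i: "i < k" and S: "S \<in> M_subsets k t"
  shows "R_subset i S \<in> M_subsets k t"
proof -
  have Sk: "S \<subseteq> {..<k}" and c: "1 \<le> card S" "card S \<le> t" using S by (auto simp: M_subsets_def)
  have fin: "finite S" using finite_subset[OF Sk] by blast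
  show ?thesis
  proof (cases "odd (card (S - {i}))")
    case odd: True
    show ?thesis
    proof (cases "i \<in> S")
      case True
      have "1 \<le> card (S - {i})" using odd odd_pos by fastforce
      moreover have "card (S - {i}) \<le> t" using c(2) card_Diff1_le[of S i] by linarith
      ultimately show ?thesis using True odd Sk by (auto simp: R_subset_def M_subsets_def)
    next
      case False
      then have "S - {i} = S" by simp
      then have "card S < t" using odd t c(2) by (cases "card S = t") auto
      then show ?thesis using odd False Sk fin i by (auto simp: R_subset_def M_subsets_def)
    qed
  qed (use S in \<open>simp add: R_subset_def\<close>)
qed

lemma M_row_R_subset:
  assumes i: "i < k" and z: "z \<in> pm_vecs k" and S: "S \<subseteq> {..<k}"
  shows "M_row (R_subset i S) (R_op k i z) = M_row S z"
proof -
  have fin: "finite S" using finite_subset[OF S] by blast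
  have "R_subset i S \<subseteq> {..<k}" using S i by (auto simp: R_subset_def)
  then have "M_row (R_subset i S) (R_op k i z) = z ! i ^ card (R_subset i S) * M_row (S - {i}) z"
    by (simp add: M_row_R_op)
  moreover have "z ! i ^ card (R_subset i S) = (if i \<in> S then z ! i else 1)"
    using pm_vecs_nth[OF z i] odd_card_R_subset[OF fin, of i] by (auto simp: power_minus1_even)
  ultimately show ?thesis using M_row_remove[OF fin] by simp
qed

lemma agree_count_R_op_mem:
  assumes X: "set X \<subseteq> pm_vecs k" and S: "S \<subseteq> {..<k}" "i \<in> S" and u: "u \<in> pm_vecs k"
  shows "agree_count (map (R_op k i) X) S u = agree_count X S (R_op k i u)"
proof (rule agree_count_map_eq)
  have i: "i < k" using S by auto
  fix r assume "r \<in> set X"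
  have "(\<forall>j\<in>S. R_op k i r ! j = u ! j) \<longleftrightarrow> r ! i = u ! i \<and> (\<forall>j\<in>S. R_op k i r ! j = u ! j)"
    using S i by (auto simp: R_op_nth)
  also have "\<dots> \<longleftrightarrow> r ! i = u ! i \<and> (\<forall>j\<in>S. r ! j = R_op k i u ! j)"
    using S pm_vecs_nth[OF u i] by (auto simp: R_op_nth subset_iff)
  also have "\<dots> \<longleftrightarrow> (\<forall>j\<in>S. r ! j = R_op k i u ! j)"
    using S i by (auto simp: R_op_nth)
  finally show "(\<forall>j\<in>S. R_op k i r ! j = u ! j) \<longleftrightarrow> (\<forall>j\<in>S. r ! j = R_op k i u ! j)" .
qed

lemma agree_count_R_op_not_mem:
  assumes X: "set X \<subseteq> pm_vecs k" and i: "i < k" "i \<notin> S" and S: "S \<subseteq> {..<k}"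
    and u: "u \<in> pm_vecs k"
  shows "agree_count (map (R_op k i) X) S u =
    agree_count X (insert i S) (u[i := 1]) + agree_count X (insert i S) ((map uminus u)[i := -1])"
  unfolding agree_count_def filter_map o_def length_map
proof (subst length_filter_split[where Q = "\<lambda>r. r ! i = 1"], intro arg_cong2[where f = "(+)"])
  have ul: "length u = k" using pm_vecs_length[OF u] .
  have R: "R_op k i r ! j = r ! j * r ! i" if "j \<in> S" for r j
    using that S i by (auto simp: R_op_nth)
  have upd: "(u[i := 1]) ! j = u ! j" "((map uminus u)[i := -1]) ! j = - u ! j" if "j \<in> S" for j
  proof -
    have "j \<noteq> i" "j < k" using that S i by auto
    then show "(u[i := 1]) ! j = u ! j" "((map uminus u)[i := -1]) ! j = - u ! j" using ul by simp_all
  qed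
  have "(\<forall>j\<in>S. R_op k i r ! j = u ! j) \<and> r ! i = 1 \<longleftrightarrow> (\<forall>j\<in>insert i S. r ! j = u[i := 1] ! j)" for r
    using R upd i ul by auto
  then show "length (filter (\<lambda>r. (\<forall>j\<in>S. R_op k i r ! j = u ! j) \<and> r ! i = 1) X) =
      length (filter (\<lambda>r. \<forall>j\<in>insert i S. r ! j = u[i := 1] ! j) X)"
    by simp
  have "(\<forall>j\<in>S. R_op k i r ! j = u ! j) \<and> r ! i \<noteq> 1 \<longleftrightarrow>
      (\<forall>j\<in>insert i S. r ! j = (map uminus u)[i := -1] ! j)" if "r \<in> set X" for r
  proof -
    have "r ! i = 1 \<or> r ! i = -1" using X that pm_vecs_nth i(1) by blast
    then show ?thesis using R upd i ul by auto
  qed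
  then show "length (filter (\<lambda>r. (\<forall>j\<in>S. R_op k i r ! j = u ! j) \<and> r ! i \<noteq> 1) X) =
      length (filter (\<lambda>r. \<forall>j\<in>insert i S. r ! j = (map uminus u)[i := -1] ! j) X)"
    by (simp cong: filter_cong)
qed

lemma is_OA_map_R_op:
  assumes X: "is_OA N k t X" and t: "even t" and i: "i < k"
  shows "is_OA N k t (map (R_op k i) X)"
proof (rule is_OA_map[OF X R_op_pm_vecs[OF i]])
  fix S u assume S: "S \<subseteq> {..<k}" "card S = t" and u: "u \<in> pm_vecs k"
  show "2 ^ t * agree_count (map (R_op k i) X) S u = N"
  proof (cases "i \<in> S")
    case True
    then show ?thesis
      using agree_count_R_op_mem[OF OA_rows[OF X] S(1) True u] OA_agree_count[OF X S R_op_pm_vecs[OF i u]]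
      by simp
  next
    case False
    define T where "T = insert i S"
    define u\<^sub>1 where "u\<^sub>1 = u[i := 1]"
    define u\<^sub>2 where "u\<^sub>2 = (map uminus u)[i := -1]"
    have T: "T \<subseteq> {..<k}" "card T = Suc t"
      using S i False finite_subset[OF S(1)] by (auto simp: T_def)
    have ul: "length u = k" using pm_vecs_length[OF u] .
    have u12: "u\<^sub>1 \<in> pm_vecs k" "u\<^sub>2 \<in> pm_vecs k"
      using u ul i unfolding pm_vecs_iff u\<^sub>1_def u\<^sub>2_def by (auto simp: nth_list_update)
    have "u\<^sub>2 ! j = (if j \<in> T then - u\<^sub>1 ! j else u\<^sub>1 ! j)" if "j \<in> T" for j
      using that T(1) ul i by (auto simp: u\<^sub>1_def u\<^sub>2_def nth_list_update subset_iff)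
    then have "int (2 ^ Suc t * agree_count X T u\<^sub>2) - int N =
        - (int (2 ^ Suc t * agree_count X T u\<^sub>1) - int N)"
      using OA_agree_count_flip[OF X T order_refl u12] T(2) t by simp
    then have "2 ^ Suc t * (agree_count X T u\<^sub>1 + agree_count X T u\<^sub>2) = 2 * N"
      unfolding distrib_left by linarith
    moreover have "agree_count (map (R_op k i) X) S u = agree_count X T u\<^sub>1 + agree_count X T u\<^sub>2"
      unfolding T_def u\<^sub>1_def u\<^sub>2_def by (rule agree_count_R_op_not_mem[OF OA_rows[OF X] i False S(1) u])
    ultimately show ?thesis by simp
  qed
qed

lemma OD_equiv_map_R_op:
  assumes X: "set X \<subseteq> pm_vecs k" and i: "i < k"
  shows "OD_equiv k X (map (R_op k i) X)"
proof (rule OD_equiv_map[where \<sigma> = "transpose 0 (Suc i)" and a = "\<lambda>r. r ! i" and b = "\<lambda>_. 1"])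
  show "transpose 0 (Suc i) permutes {..<Suc k}" using i by (intro permutes_swap_id) auto
  show "r ! i \<in> {1, -1}" if "r \<in> set X" for r using pm_vecs_nth X that i by blast
  fix r j assume r: "r \<in> set X" and j: "j < Suc k"
  have "r ! i = 1 \<or> r ! i = -1" using pm_vecs_nth X r i by blast
  then show "(1 # R_op k i r) ! j = r ! i * 1 * (1 # r) ! transpose 0 (Suc i) j"
    using j i by (cases j) (auto simp: R_op_nth transpose_def)
qed simp

lemma OD_symmetry_R_op:
  assumes t: "even t" and i: "i < k"
  shows "OD_symmetry N k t (R_op k i)"
  unfolding OD_symmetry_def
proof (intro conjI allI impI)
  show "bij_betw (R_op k i) (pm_vecs k) (pm_vecs k)"
    using R_op_pm_vecs[OF i] R_op_R_op[OF i] by (rule bij_betw_involution)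
  show "sys_sym (pm_vecs k) (R_op k i) (ineq_rows k t) ineq_A ineq_b"
  proof (rule sys_sym_ineq_rows[where \<tau> = "R_subset i" and \<epsilon> = "\<lambda>_. 1"])
    show "bij_betw (R_subset i) (M_subsets k t) (M_subsets k t)"
      using R_subset_M_subsets[OF t i] by (intro bij_betw_involution) simp_all
    fix S z assume "S \<in> M_subsets k t" "z \<in> pm_vecs k"
    then show "M_row (R_subset i S) (R_op k i z) = 1 * M_row S z"
      using M_row_R_subset[OF i] by (simp add: M_subsets_def)
  qed simp
  fix X assume "is_OA N k t X"
  then show "is_OA N k t (map (R_op k i) X)" and "OD_equiv k X (map (R_op k i) X)"
    using is_OA_map_R_op[OF _ t i] OD_equiv_map_R_op[OF OA_rows i] by blast+
qed

theorem lemma9: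
  fixes N k t :: nat and X :: "int list list"
  assumes "1 \<le> t" and "t + 1 \<le> k" and "is_OA N k t X"
  shows "(even t \<longrightarrow> (\<forall>g\<in>G_OD k. formulation_sym k t N g \<and>
            (\<exists>Y. is_OA N k t Y \<and> freq Y = act k g (freq X) \<and> OD_equiv k X Y)))
       \<and> (odd t \<longrightarrow> (\<forall>g\<in>G_iso k. formulation_sym k t N g \<and>
            (\<exists>Y. is_OA N k t Y \<and> freq Y = act k g (freq X) \<and> isomorphic_OA k X Y)))"
proof -
  have iso_gens: "OD_symmetry N k t h" if "h \<in> G_iso_gens k" for h
    using that OD_symmetry_coord_perm OD_symmetry_sign_change unfolding G_iso_gens_def by blast
  have image: "formulation_sym k t N g \<and> is_OA N k t (map g X) \<and>
      freq (map g X) = act k g (freq X) \<and> OD_equiv k X (map g X)" if "OD_symmetry N k t g" for g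
    using that OD_symmetry_imp_formulation_sym freq_map[OF OA_rows[OF assms(3)]] assms(3)
    unfolding OD_symmetry_def by blast
  have "formulation_sym k t N g \<and> (\<exists>Y. is_OA N k t Y \<and> freq Y = act k g (freq X) \<and> OD_equiv k X Y)"
    if "even t" and "g \<in> G_OD k" for g
  proof -
    have "OD_symmetry N k t g"
      using that OD_symmetry_gen_by iso_gens OD_symmetry_R_op unfolding G_OD_def G_OD_gens_def by blast
    then show ?thesis using image by blast
  qed
  moreover have "formulation_sym k t N g \<and>
      (\<exists>Y. is_OA N k t Y \<and> freq Y = act k g (freq X) \<and> isomorphic_OA k X Y)"
    if "g \<in> G_iso k" for g
  proof -
    have "OD_symmetry N k t g" using that OD_symmetry_gen_by iso_gens unfolding G_iso_def by blast
    moreover have "isomorphic_OA k X (map g X)" using that unfolding isomorphic_OA_def by auto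
    ultimately show ?thesis using image by blast
  qed
  ultimately show ?thesis by blast
qed

end
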